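(* Let $\ell\ge 1$, $c\ge 1$ and $s\ge 1$ be integers, and let $\underline{\eta}=(\eta_1,\dots,\eta_s)$ be integer thresholds with $1\le \eta_1<\eta_2<\dots<\eta_s\le \ell$. For $x\in\{0,\dots,\ell\}$ let $o(x)=0^{\ell-x}1^{x}$ and $u(x)=1^{x}0^{\ell-x}$ (words of length $\ell$), and for a word $w$ let $w^{c}$ denote the concatenation of $c$ copies of $w$. Define the binary word $$p(c)=o(0)^{c}\;\,0\,o(\eta_1)^{c}\;\,0\,o(\eta_2)^{c}\cdots 0\,o(\eta_s)^{c}\;\,1\,u(\ell)^{c}\;\,1\,u(\eta_s-1)^{c}\;\,1\,u(\eta_{s-1}-1)^{c}\cdots 1\,u(\eta_1-1)^{c}\;\,0,$$ which has length $(2s+2)(c\ell+1)$, and let $v=(v_t)_{t\ge 0}$ be the infinite periodic binary sequence $p(c)p(c)p(c)\cdots$. Let $q=(q_0,\dots,q_{2s+1})=(0,1,\dots,s,s,s-1,\dots,1,0)$. Then for every integer $i\ge 0$, $$\underline{\eta}\Big(\sum_{t=i}^{i+\ell-1} v_t\Big)=q_{\lfloor i/(c\ell+1)\rfloor \bmod (2s+2)}.$$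
   Context: For thresholds $\underline{\eta}=(\eta_1<\dots<\eta_s)$ (positive integers), the SQGT outcome of a nonnegative integer $y$ is $\underline{\eta}(y)=|\{k\in\{1,\dots,s\}:\eta_k\le y\}|\in\{0,\dots,s\}$. The sum $\sum_{t=i}^{i+\ell-1}v_t$ is the inner product of the test $v$ with the length-$\ell$ burst (consecutive block of ones) occupying positions $i,\dots,i+\ell-1$. *)

theory Defs
  imports Main
begin

definition sqgt :: "(nat \<Rightarrow> nat) \<Rightarrow> nat \<Rightarrow> nat \<Rightarrow> nat" where
  "sqgt eta s y = card {k \<in> {1..s}. eta k \<le> y}"

definition o_word :: "nat \<Rightarrow> nat \<Rightarrow> nat list" where
  "o_word l x = replicate (l - x) 0 @ replicate x 1"

definition u_word :: "nat \<Rightarrow> nat \<Rightarrow> nat list" where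
  "u_word l x = replicate x 1 @ replicate (l - x) 0"

definition wpow :: "nat list \<Rightarrow> nat \<Rightarrow> nat list" where
  "wpow w c = concat (replicate c w)"

definition p_word :: "nat \<Rightarrow> nat \<Rightarrow> nat \<Rightarrow> (nat \<Rightarrow> nat) \<Rightarrow> nat list" where
  "p_word l c s eta =
     wpow (o_word l 0) c
     @ concat (map (\<lambda>k. 0 # wpow (o_word l (eta k)) c) [1..<s+1])
     @ (1 # wpow (u_word l l) c)
     @ concat (map (\<lambda>k. 1 # wpow (u_word l (eta k - 1)) c) (rev [1..<s+1]))
     @ [0]"

definition v_seq :: "nat \<Rightarrow> nat \<Rightarrow> nat \<Rightarrow> (nat \<Rightarrow> nat) \<Rightarrow> nat \<Rightarrow> nat" where
  "v_seq l c s eta t = (let p = p_word l c s eta in p ! (t mod length p))"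

definition q_seq :: "nat \<Rightarrow> nat \<Rightarrow> nat" where
  "q_seq s j = (if j \<le> s then j else 2 * s + 1 - j)"

end

theory Submission
  imports Defs
begin

text \<open>Moving the final \<open>0\<close> of \<open>p(c)\<close> to the front, one period of \<open>v\<close> (shifted by one)
  consists of \<open>2s + 2\<close> blocks of length \<open>cl + 1\<close>: a separator bit followed by \<open>c\<close> copies
  of a word \<open>w\<^sub>J\<close> of length \<open>l\<close>. A burst starting in block \<open>J\<close> either stays inside the
  copies of \<open>w\<^sub>J\<close>, and then meets a cyclic shift of \<open>w\<^sub>J\<close>, i.e. exactly its weight, or it
  meets a suffix of \<open>w\<^sub>J\<close>, the next separator and a prefix of \<open>w\<^sub>J\<^sub>+\<^sub>1\<close>. With the sentinels
  \<open>\<eta>\<^sub>0 = 0\<close> and \<open>\<eta>\<^sub>s\<^sub>+\<^sub>1 = l + 1\<close> the words are arranged so that in both cases the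
  count lies in \<open>[\<eta>\<^sub>q, \<eta>\<^sub>q\<^sub>+\<^sub>1)\<close> for \<open>q = q\<^sub>J\<close>: ones sit at the end of the \<open>o\<close>-words and
  at the start of the \<open>u\<close>-words, so sliding the burst from \<open>w\<^sub>J\<close> to \<open>w\<^sub>J\<^sub>+\<^sub>1\<close> moves the count
  monotonically between their weights.\<close>

lemma length_wpow [simp]: "length (wpow w c) = c * length w"
  by (simp add: wpow_def length_concat sum_list_replicate)

lemma nth_wpow: "k < c * length w \<Longrightarrow> wpow w c ! k = w ! (k mod length w)"
proof (induction c arbitrary: k)
  case (Suc c)
  then show ?case
    by (cases "k < length w") (auto simp: wpow_def nth_append length_concat sum_list_replicate mod_if)
qed simp

lemma length_o_word [simp]: "x \<le> l \<Longrightarrow> length (o_word l x) = l"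
  by (simp add: o_word_def)

lemma length_u_word [simp]: "x \<le> l \<Longrightarrow> length (u_word l x) = l"
  by (simp add: u_word_def)

lemma sum_o_word:
  assumes "b \<le> l" "x \<le> l"
  shows "(\<Sum>k=a..<b. o_word l x ! k) = b - max a (l - x)"
proof -
  have "(\<Sum>k=a..<b. o_word l x ! k) = (\<Sum>k=a..<b. if l - x \<le> k then 1 else 0)"
    using assms by (intro sum.cong) (auto simp: o_word_def nth_append)
  also have "\<dots> = b - max a (l - x)"
    by (induction b) (auto simp: max_def)
  finally show ?thesis .
qed

lemma sum_u_word:
  assumes "b \<le> l" "y \<le> l"
  shows "(\<Sum>k=a..<b. u_word l y ! k) = min b y - a"
proof -
  have "(\<Sum>k=a..<b. u_word l y ! k) = (\<Sum>k=a..<b. if k < y then 1 else 0)"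
    using assms by (intro sum.cong) (auto simp: u_word_def nth_append)
  also have "\<dots> = min b y - a"
    by (induction b) (auto simp: min_def)
  finally show ?thesis .
qed

lemma nth_concat_equal_length:
  assumes "\<And>j. j < N \<Longrightarrow> length (B j) = L" "n < N * L"
  shows "concat (map B [0..<N]) ! n = B (n div L) ! (n mod L)"
  using assms
proof (induction N)
  case (Suc N)
  have len: "length (concat (map B [0..<N])) = N * L"
    using Suc.prems(1) by (induction N) auto
  show ?case
  proof (cases "n < N * L")
    case False
    define m where "m = n - N * L"
    have "n = N * L + m" "m < L"
      using False Suc.prems(2) by (simp_all add: m_def)
    then have "n div L = N" "n mod L = n - N * L"
      by simp_all
    with False len show ?thesis by (simp add: nth_append)
  qed (use Suc len in \<open>simp add: nth_append\<close>)
qed simp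

lemma nth_concat_equal_length_mod:
  assumes "\<And>j. j < N \<Longrightarrow> length (B j) = L" "0 < N" "0 < L"
  shows "concat (map B [0..<N]) ! (n mod (N * L)) = B (n div L mod N) ! (n mod L)"
proof -
  have "n mod (N * L) = n div L mod N * L + n mod L"
    using mod_mult2_eq[of n L N] by (simp add: mult.commute)
  moreover have "n mod (N * L) < N * L"
    using assms(2,3) by simp
  ultimately show ?thesis
    using assms nth_concat_equal_length[of N B L "n mod (N * L)"] by simp
qed

lemma sum_periodic_window:
  fixes w :: "nat \<Rightarrow> 'a::cancel_comm_monoid_add"
  shows "(\<Sum>k=b..<b+l. w (k mod l)) = (\<Sum>k=0..<l. w k)"
proof (induction b)
  case (Suc b)
  have "w (b mod l) + (\<Sum>k=Suc b..<Suc (b+l). w (k mod l)) = (\<Sum>k=b..<Suc (b+l). w (k mod l))"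
    by (rule sum.atLeast_Suc_lessThan[symmetric]) simp
  also have "\<dots> = (\<Sum>k=b..<b+l. w (k mod l)) + w ((b + l) mod l)"
    by (rule sum.atLeastLessThan_Suc) simp
  finally have "w (b mod l) + (\<Sum>k=Suc b..<Suc b+l. w (k mod l)) = w (b mod l) + (\<Sum>k=0..<l. w k)"
    using Suc.IH by (simp add: add.commute)
  then show ?case
    by (rule add_left_imp_eq)
qed simp

lemma sum_shift_interval:
  fixes f :: "nat \<Rightarrow> 'a::comm_monoid_add"
  shows "(\<Sum>t = a + m..<a + n. f t) = (\<Sum>k = m..<n. f (a + k))"
  using sum.shift_bounds_nat_ivl[where g = f and m = m and k = a and n = n] by (simp add: add.commute)

lemma sum_window_within_block:
  fixes f w :: "nat \<Rightarrow> 'a::cancel_comm_monoid_add"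
  assumes body: "\<And>k. k < c * l \<Longrightarrow> f (j * (c * l + 1) + k) = w (k mod l)"
    and "r + l \<le> c * l"
  shows "(\<Sum>t = j * (c * l + 1) + r..<j * (c * l + 1) + r + l. f t) = (\<Sum>k = 0..<l. w k)"
proof -
  have "(\<Sum>t = j * (c * l + 1) + r..<j * (c * l + 1) + r + l. f t)
      = (\<Sum>k = r..<r + l. w (k mod l))"
    unfolding add.assoc sum_shift_interval using body assms(2) by (intro sum.cong) auto
  also have "\<dots> = (\<Sum>k = 0..<l. w k)"
    by (rule sum_periodic_window)
  finally show ?thesis .
qed

lemma sum_window_across_blocks:
  fixes f w w' :: "nat \<Rightarrow> 'a::comm_monoid_add"
  assumes body: "\<And>k. k < c * l \<Longrightarrow> f (j * (c * l + 1) + k) = w (k mod l)"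
    and sep: "f (j * (c * l + 1) + c * l) = b"
    and body': "\<And>k. k < c * l \<Longrightarrow> f (Suc j * (c * l + 1) + k) = w' (k mod l)"
    and r: "r \<le> c * l" "c * l < r + l" and c: "1 \<le> c"
  shows "(\<Sum>t = j * (c * l + 1) + r..<j * (c * l + 1) + r + l. f t)
    = (\<Sum>k = r + l - c * l..<l. w k) + b + (\<Sum>k = 0..<r + l - c * l - 1. w' k)"
proof -
  define a where "a = j * (c * l + 1)"
  define d where "d = r + l - c * l"
  define E where "E = c * l - l"
  have l_le: "l \<le> c * l"
    using c by simp
  have d: "1 \<le> d" "d \<le> l" "r = d + E" "c * l = l + E"
    using r l_le by (auto simp: d_def E_def)
  have split: "(\<Sum>t = a + r..<a + r + l. f t)
      = (\<Sum>t = a + r..<a + c * l. f t) + f (a + c * l) + (\<Sum>t = a + c * l + 1..<a + r + l. f t)"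
  proof -
    have "(\<Sum>t = a + r..<a + r + l. f t) = (\<Sum>t = a + r..<a + c * l. f t) + (\<Sum>t = a + c * l..<a + r + l. f t)"
      by (rule sum.atLeastLessThan_concat[symmetric]) (use r in auto)
    moreover have "(\<Sum>t = a + c * l..<a + r + l. f t) = f (a + c * l) + (\<Sum>t = a + c * l + 1..<a + r + l. f t)"
      by (subst sum.atLeast_Suc_lessThan) (use r in auto)
    ultimately show ?thesis
      by (simp add: add.assoc)
  qed
  have tail: "(\<Sum>t = a + r..<a + c * l. f t) = (\<Sum>k = d..<l. w k)"
  proof -
    have "(\<Sum>t = a + r..<a + c * l. f t) = (\<Sum>k = d + E..<l + E. w (k mod l))"
      unfolding sum_shift_interval using body d by (intro sum.cong) (auto simp: a_def)
    also have "\<dots> = (\<Sum>k = d..<l. w ((k + E) mod l))"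
      by (rule sum.shift_bounds_nat_ivl)
    also have "\<dots> = (\<Sum>k = d..<l. w k)"
    proof (intro sum.cong refl)
      fix k assume "k \<in> {d..<l}"
      moreover have "E = (c - 1) * l"
        by (simp add: E_def diff_mult_distrib)
      ultimately show "w ((k + E) mod l) = w k"
        by simp
    qed
    finally show ?thesis .
  qed
  have head: "(\<Sum>t = a + c * l + 1..<a + r + l. f t) = (\<Sum>k = 0..<d - 1. w' k)"
  proof -
    have bounds: "a + c * l + 1 = Suc j * (c * l + 1) + 0" "a + r + l = Suc j * (c * l + 1) + (d - 1)"
      using r(2) by (simp_all add: a_def d_def)
    have "(\<Sum>t = a + c * l + 1..<a + r + l. f t) = (\<Sum>k = 0..<d - 1. f (Suc j * (c * l + 1) + k))"
      unfolding bounds by (rule sum_shift_interval)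
    also have "\<dots> = (\<Sum>k = 0..<d - 1. w' k)"
      using body' d l_le by (intro sum.cong) auto
    finally show ?thesis .
  qed
  show ?thesis
    unfolding a_def[symmetric] d_def[symmetric] split tail head sep[folded a_def] ..
qed

locale sqgt_thresholds =
  fixes l s :: nat and eta :: "nat \<Rightarrow> nat"
  assumes s_pos: "1 \<le> s"
    and eta_strict: "\<And>k. 1 \<le> k \<Longrightarrow> k < s \<Longrightarrow> eta k < eta (k + 1)"
    and eta_first: "1 \<le> eta 1"
    and eta_last: "eta s \<le> l"
begin

text \<open>With the sentinels \<open>\<eta>\<^sub>0 = 0\<close> and \<open>\<eta>\<^sub>s\<^sub>+\<^sub>1 = l + 1\<close>, the outcome is \<open>k\<close> exactly
  when \<open>\<eta>\<^sub>k \<le> y < \<eta>\<^sub>k\<^sub>+\<^sub>1\<close>.\<close>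
definition eta_ext :: "nat \<Rightarrow> nat" where
  "eta_ext k = (if k = 0 then 0 else if k \<le> s then eta k else l + 1)"

lemma eta_ext_less_Suc: "k \<le> s \<Longrightarrow> eta_ext k < eta_ext (Suc k)"
  using s_pos eta_first eta_last eta_strict[of k] by (cases "k = s") (auto simp: eta_ext_def)

lemma eta_ext_strict_mono: "a < b \<Longrightarrow> b \<le> Suc s \<Longrightarrow> eta_ext a < eta_ext b"
proof (induction b)
  case (Suc b)
  then show ?case
    using eta_ext_less_Suc[of b] by (cases "a = b") auto
qed simp

lemma eta_ext_mono: "a \<le> b \<Longrightarrow> b \<le> Suc s \<Longrightarrow> eta_ext a \<le> eta_ext b"
  using eta_ext_strict_mono[of a b] by (cases "a = b") auto

lemma eta_ext_le: "k \<le> s \<Longrightarrow> eta_ext k \<le> l"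
  using eta_ext_strict_mono[of k "Suc s"] by (simp add: eta_ext_def)

lemma eta_ext_le_Suc_l: "eta_ext k \<le> l + 1"
  using eta_ext_le[of k] by (cases "k \<le> s") (auto simp: eta_ext_def)

lemma eta_ext_pos: "0 < k \<Longrightarrow> 0 < eta_ext k"
  using eta_ext_strict_mono[of 0 k] by (cases "k \<le> Suc s") (auto simp: eta_ext_def)

lemma sqgt_eqI:
  assumes "k \<le> s" "eta_ext k \<le> y" "y < eta_ext (Suc k)"
  shows "sqgt eta s y = k"
proof -
  have "eta k' \<le> y \<longleftrightarrow> k' \<le> k" if "k' \<in> {1..s}" for k'
  proof -
    have "eta k' = eta_ext k'"
      using that by (simp add: eta_ext_def)
    moreover have "eta_ext k' \<le> eta_ext k" if "k' \<le> k"
      using that assms(1) by (intro eta_ext_mono) auto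
    moreover have "eta_ext (Suc k) \<le> eta_ext k'" if "\<not> k' \<le> k"
      using that \<open>k' \<in> {1..s}\<close> by (intro eta_ext_mono) auto
    ultimately show ?thesis
      using assms(2,3) by (metis le_trans not_le)
  qed
  then have "{k' \<in> {1..s}. eta k' \<le> y} = {1..k}"
    using assms(1) by auto
  then show ?thesis
    by (simp add: sqgt_def)
qed

definition block_word :: "nat \<Rightarrow> nat list" where
  "block_word J = (if J \<le> s then o_word l (eta_ext J) else u_word l (eta_ext (2 * s + 2 - J) - 1))"

definition block_sep :: "nat \<Rightarrow> nat" where
  "block_sep J = (if J \<le> s then 0 else 1)"

lemma length_block_word [simp]: "length (block_word J) = l"
  using eta_ext_le[of J] eta_ext_le_Suc_l[of "2 * s + 2 - J"] by (simp add: block_word_def)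

lemma p_word_eq_rotate1_blocks:
  "p_word l c s eta = rotate1 (concat (map (\<lambda>J. block_sep J # wpow (block_word J) c) [0..<2 * s + 2]))"
proof -
  have split: "[0..<2 * s + 2] = 0 # [1..<s + 1] @ (s + 1) # [s + 2..<2 * s + 2]"
    using upt_add_eq_append[of 1 "s + 1" "s + 1"] by (simp del: upt_Suc add: upt_rec mult_2 add.assoc)
  have rev_upt: "rev [1..<s + 1] = map (\<lambda>J. 2 * s + 2 - J) [s + 2..<2 * s + 2]"
    by (rule nth_equalityI) (auto simp del: upt_Suc simp add: rev_nth)
  have ascending: "map (\<lambda>J. block_sep J # wpow (block_word J) c) [1..<s + 1]
      = map (\<lambda>k. 0 # wpow (o_word l (eta k)) c) [1..<s + 1]"
    by (rule map_cong) (auto simp: block_sep_def block_word_def eta_ext_def)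
  have descending: "map (\<lambda>J. block_sep J # wpow (block_word J) c) [s + 2..<2 * s + 2]
      = map (\<lambda>k. 1 # wpow (u_word l (eta k - 1)) c) (rev [1..<s + 1])"
    unfolding rev_upt map_map
    by (rule map_cong) (auto simp del: upt_Suc simp add: block_sep_def block_word_def eta_ext_def)
  have first: "block_sep 0 # wpow (block_word 0) c = 0 # wpow (o_word l 0) c"
    by (simp add: block_sep_def block_word_def eta_ext_def)
  have middle: "block_sep (s + 1) # wpow (block_word (s + 1)) c = 1 # wpow (u_word l l) c"
    by (simp add: block_sep_def block_word_def eta_ext_def)
  show ?thesis
    unfolding p_word_def split list.map map_append concat.simps concat_append
      ascending descending first middle
    by simp
qed

lemma v_seq_eq_nth_block:
  "v_seq l c s eta t
    = (block_sep J # wpow (block_word J) c) ! (Suc t mod (c * l + 1))"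
  if "J = Suc t div (c * l + 1) mod (2 * s + 2)"
proof -
  define B where "B J = block_sep J # wpow (block_word J) c" for J
  define Q where "Q = concat (map B [0..<2 * s + 2])"
  have len: "length (B J) = c * l + 1" for J
    by (simp add: B_def)
  then have len_Q: "length Q = (2 * s + 2) * (c * l + 1)"
    by (simp add: Q_def length_concat o_def len sum_list_triv)
  have "v_seq l c s eta t = rotate1 Q ! (t mod length Q)"
    unfolding v_seq_def Let_def Q_def B_def p_word_eq_rotate1_blocks length_rotate1 ..
  also have "\<dots> = Q ! (Suc t mod ((2 * s + 2) * (c * l + 1)))"
    by (simp add: len_Q nth_rotate1 mod_Suc_eq)
  also have "\<dots> = B J ! (Suc t mod (c * l + 1))"
    unfolding Q_def that by (rule nth_concat_equal_length_mod) (simp_all add: len)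
  finally show ?thesis
    by (simp add: B_def)
qed

lemma v_seq_block_body:
  assumes "k < c * l"
  shows "v_seq l c s eta (j * (c * l + 1) + k) = block_word (j mod (2 * s + 2)) ! (k mod l)"
proof -
  define L where "L = c * l + 1"
  have block_index: "Suc (j * L + k) div L = j"
    by (rule div_nat_eqI) (use assms in \<open>simp_all add: L_def\<close>)
  moreover have "Suc (j * L + k) mod L = Suc k"
    using div_mult_mod_eq[of "Suc (j * L + k)" L] unfolding block_index by linarith
  ultimately have "v_seq l c s eta (j * L + k) = (block_sep (j mod (2 * s + 2)) # wpow (block_word (j mod (2 * s + 2))) c) ! Suc k"
    using v_seq_eq_nth_block[where t = "j * L + k" and c = c, folded L_def] by simp
  then show ?thesis
    using assms by (simp add: L_def nth_wpow)
qed

lemma v_seq_block_sep: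
  "v_seq l c s eta (j * (c * l + 1) + c * l) = block_sep (Suc j mod (2 * s + 2))"
proof -
  define L where "L = c * l + 1"
  have "Suc (j * L + c * l) = Suc j * L" "0 < L"
    by (simp_all add: L_def)
  then have "Suc (j * L + c * l) div L = Suc j" "Suc (j * L + c * l) mod L = 0"
    by (simp_all only:) simp_all
  then show ?thesis
    using v_seq_eq_nth_block[where t = "j * L + c * l" and c = c, folded L_def] by (simp add: L_def)
qed

lemma sum_block_word_ascending:
  "J \<le> s \<Longrightarrow> b \<le> l \<Longrightarrow> (\<Sum>k = a..<b. block_word J ! k) = b - max a (l - eta_ext J)"
  using eta_ext_le[of J] by (simp add: block_word_def sum_o_word)

lemma sum_block_word_descending:
  "s < J \<Longrightarrow> b \<le> l \<Longrightarrow> (\<Sum>k = a..<b. block_word J ! k) = min b (eta_ext (2 * s + 2 - J) - 1) - a"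
  using eta_ext_le_Suc_l[of "2 * s + 2 - J"] by (simp add: block_word_def sum_u_word)

lemma sqgt_window_within_block:
  assumes "J < 2 * s + 2"
  shows "sqgt eta s (\<Sum>k = 0..<l. block_word J ! k) = q_seq s J"
proof (cases "J \<le> s")
  case True
  then have "(\<Sum>k = 0..<l. block_word J ! k) = eta_ext J"
    using eta_ext_le[of J] by (simp add: sum_block_word_ascending)
  then show ?thesis
    using True eta_ext_less_Suc[of J] by (simp add: sqgt_eqI q_seq_def)
next
  case False
  define k where "k = 2 * s + 1 - J"
  have k: "k \<le> s" "2 * s + 2 - J = Suc k" "q_seq s J = k"
    using False assms by (auto simp: k_def q_seq_def)
  have "(\<Sum>k = 0..<l. block_word J ! k) = eta_ext (Suc k) - 1"
    using False k(2) eta_ext_le_Suc_l[of "Suc k"] by (simp add: sum_block_word_descending)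
  moreover have "eta_ext k < eta_ext (Suc k)" "0 < eta_ext (Suc k)"
    using k(1) eta_ext_less_Suc eta_ext_pos by simp_all
  ultimately show ?thesis
    using k by (simp add: sqgt_eqI)
qed

lemma sqgt_window_across_blocks:
  assumes J: "J < 2 * s + 2" and d: "1 \<le> d" "d \<le> l"
  shows "sqgt eta s ((\<Sum>k = d..<l. block_word J ! k) + block_sep (Suc J mod (2 * s + 2))
      + (\<Sum>k = 0..<d - 1. block_word (Suc J mod (2 * s + 2)) ! k)) = q_seq s J"
    (is "sqgt eta s ?y = _")
proof -
  consider "J < s" | "J = s" | "s < J" "J < 2 * s + 1" | "J = 2 * s + 1"
    using J by linarith
  then show ?thesis
  proof cases
    case 1
    then have "?y = (l - max d (l - eta_ext J)) + (d - 1 - (l - eta_ext (Suc J)))"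
      using d by (simp add: block_sep_def sum_block_word_ascending)
    moreover have "eta_ext J < eta_ext (Suc J)" "eta_ext (Suc J) \<le> l"
      using 1 eta_ext_less_Suc eta_ext_le by simp_all
    ultimately have "eta_ext J \<le> ?y" "?y < eta_ext (Suc J)"
      using d by auto
    then show ?thesis
      using 1 by (simp add: sqgt_eqI q_seq_def)
  next
    case 2
    then have "?y = (l - max d (l - eta_ext s)) + 1 + (d - 1)"
      using d by (simp add: block_sep_def sum_block_word_ascending sum_block_word_descending eta_ext_def)
    moreover have "eta_ext (Suc s) = l + 1"
      by (simp add: eta_ext_def)
    ultimately have "eta_ext s \<le> ?y" "?y < eta_ext (Suc s)"
      using d eta_ext_le[of s] by auto
    then show ?thesis
      using 2 by (simp add: sqgt_eqI q_seq_def)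
  next
    case 3
    define k where "k = 2 * s + 1 - J"
    have k: "1 \<le> k" "k \<le> s" "2 * s + 2 - J = Suc k" "2 * s + 2 - Suc J = k" "q_seq s J = k"
      using 3 by (auto simp: k_def q_seq_def)
    have "?y = (min l (eta_ext (Suc k) - 1) - d) + 1 + min (d - 1) (eta_ext k - 1)"
      using 3 d k by (simp add: block_sep_def sum_block_word_descending)
    moreover have "0 < eta_ext k" "eta_ext k < eta_ext (Suc k)" "eta_ext (Suc k) \<le> l + 1"
      using k eta_ext_pos eta_ext_less_Suc eta_ext_le_Suc_l by simp_all
    ultimately have "eta_ext k \<le> ?y" "?y < eta_ext (Suc k)"
      using d by auto
    then show ?thesis
      using k by (simp add: sqgt_eqI)
  next
    case 4
    then have "?y = min l (eta_ext 1 - 1) - d"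
      using d by (simp add: block_sep_def sum_block_word_ascending sum_block_word_descending eta_ext_def)
    moreover have "0 < eta_ext 1"
      using eta_ext_pos by simp
    ultimately have "?y < eta_ext (Suc 0)"
      by simp
    then show ?thesis
      using 4 by (simp add: sqgt_eqI q_seq_def eta_ext_def)
  qed
qed

end

theorem mainTheorem1:
  fixes l c s :: nat and eta :: "nat \<Rightarrow> nat"
  assumes "l \<ge> 1" and "c \<ge> 1" and "s \<ge> 1"
    and "\<And>k. 1 \<le> k \<Longrightarrow> k < s \<Longrightarrow> eta k < eta (k + 1)"
    and "1 \<le> eta 1" and "eta s \<le> l"
  shows "\<forall>i::nat. sqgt eta s (\<Sum>t = i..<i + l. v_seq l c s eta t)
           = q_seq s ((i div (c * l + 1)) mod (2 * s + 2))"
proof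
  fix i
  interpret sqgt_thresholds l s eta
    using assms by unfold_locales auto
  define j where "j = i div (c * l + 1)"
  define r where "r = i mod (c * l + 1)"
  have i: "i = j * (c * l + 1) + r"
    unfolding j_def r_def by (rule div_mult_mod_eq[symmetric])
  have r: "r \<le> c * l"
    by (simp add: r_def less_Suc_eq_le)
  have next_block: "Suc j mod (2 * s + 2) = Suc (j mod (2 * s + 2)) mod (2 * s + 2)"
    by (simp add: mod_Suc_eq)
  show "sqgt eta s (\<Sum>t = i..<i + l. v_seq l c s eta t) = q_seq s (i div (c * l + 1) mod (2 * s + 2))"
  proof (cases "r + l \<le> c * l")
    case True
    then have window: "(\<Sum>t = i..<i + l. v_seq l c s eta t) = (\<Sum>k = 0..<l. block_word (j mod (2 * s + 2)) ! k)"
      unfolding i by (intro sum_window_within_block v_seq_block_body)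
    show ?thesis
      unfolding window j_def[symmetric] by (rule sqgt_window_within_block) simp
  next
    case False
    have window: "(\<Sum>t = i..<i + l. v_seq l c s eta t)
        = (\<Sum>k = r + l - c * l..<l. block_word (j mod (2 * s + 2)) ! k) + block_sep (Suc j mod (2 * s + 2))
          + (\<Sum>k = 0..<r + l - c * l - 1. block_word (Suc j mod (2 * s + 2)) ! k)"
      unfolding i using False r assms(2) by (intro sum_window_across_blocks v_seq_block_body v_seq_block_sep) auto
    show ?thesis
      unfolding window next_block j_def[symmetric]
      by (rule sqgt_window_across_blocks) (use False r in auto)
  qed
qed

end
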